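(* Every triple in $V(\mathfrak{B})$ is a permutation of one of the following six triples, for some distinct $u,v,w\in U(\mathfrak{B})$. (i) $\langle u,v,w\rangle$ where $\{\langle u,v\rangle,\langle u,w\rangle\}=\Xi(u)$ and $\langle v,w\rangle$ is a $\Xi$-pair, (ii) $\langle u,v,w\rangle$ where $\{\langle u,v\rangle,\langle u,w\rangle\}=\Xi(u)$, and $\langle v,w\rangle$ is a base-pair, (iii) $\langle u,v,w\rangle$ where $\langle u,v\rangle$, $\langle u,w\rangle$, and $\langle v,w\rangle$ are base-pairs, (iv) $\langle u,u,v\rangle$ where $\langle u,v\rangle$ is a $\Xi$-pair, (v) $\langle u,u,v\rangle$ where $\langle u,v\rangle$ is a base-pair, (vi) $\langle u,u,u\rangle$.
   Context: Let $\mathfrak{A}=\langle A,+,\overline{\phantom{x}},;,\breve{\phantom{x}},1'\rangle$ be a complete atomic weakly associative relation algebra with set of atoms $\mathsf{At}\,\mathfrak{A}$, and let $0'=\overline{1'}$. Its suitable structure is $\mathfrak{B}=\langle B,T_\kappa,E_{\kappa\lambda}\rangle_{\kappa,\lambda<3}$, where $B=\{s\in{}^3\mathsf{At}\,\mathfrak{A}: s_2;s_0\geq s_1\}$, $T_\kappa=\{\langle s,t\rangle: s_\kappa=t_\kappa\}$, $E_{\kappa\kappa}=B$, and $E_{\kappa\lambda}=E_{\lambda\kappa}=\{s\in B: s_\mu\leq 1'\}$ whenever $\{\kappa,\lambda,\mu\}=\{0,1,2\}$. $\mathrm{Tr}(\mathfrak{B})$ is the set of all sequences (trails) $p=\langle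 t_0,\kappa_0,\dots,t_n,\kappa_n\rangle$ with $n\in\omega$, $t_0,\dots,t_n\in B$, $\kappa_0,\dots,\kappa_n<3$, and $t_i\neq t_{i+1}$, $t_i\,T_{\kappa_i}\,t_{i+1}$ for all $i<n$; $\kappa_n$ is the pointer of $p$ and $|p|=n+1$ its length. For $\lambda<3$, $p\lambda=\langle t_0,\kappa_0,\dots,t_{n-1},\kappa_{n-1},t_n,\lambda\rangle$. $p$ is reduced if: (a) if $|p|=1$ and $t_0\in E_{\kappa_0\lambda}$ then $\kappa_0\leq\lambda<3$; (b) if $|p|>1$ then $\kappa_{n-1}=\kappa_n$ and for all $\lambda<3$, $t_n\in E_{\kappa_n\lambda}$ iff $\kappa_n=\lambda$; (c) if $0\leq i<|p|-2$ then $t_i\neq t_{i+2}$ or $\kappa_i\neq\kappa_{i+1}$. $\approx$ is the smallest equivalence relation on $\mathrm{Tr}(\mathfrak{B})$ such that (1) $\langle t_0,\kappa_0,\dots,t_i,\lambda,s,\lambda,t_i,\kappa_i,\dots,t_n,\kappa_n\rangle\approx\langle t_0,\kappa_0,\dots,t_i,\kappa_i,\dots,t_n,\kappa_n\rangle$; (2) $\langle t_0,\kappa_0,\dots,t_n,\lambda,s,\kappa_n\rangle\approx\langle t_0,\kappa_0,\dots,t_n,\kappa_n\rangle$ where $\lambda\neq\kappa_n$; (3) $\langle t_0,\kappa_0,\dots,t_n,\lambda\rangle\approx\langle t_0,\kappa_0,\dots,t_n,\kappa_n\rangle$ where $t_n\in E_{\lambda\kappa_n}$. $p^{\mathfrak{B}}$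 is the $\approx$-class of $p$; each class contains a unique reduced trail. $U(\mathfrak{B})=\{p^{\mathfrak{B}}:p\in\mathrm{Tr}(\mathfrak{B})\}$, and for $u\in U(\mathfrak{B})$, $|u|$ is the length of the unique reduced trail in $u$. $V(\mathfrak{B})=\{\langle (p0)^{\mathfrak{B}},(p1)^{\mathfrak{B}},(p2)^{\mathfrak{B}}\rangle: p\in\mathrm{Tr}(\mathfrak{B})\}$ (the triples of trails). For $u\in U(\mathfrak{B})$: if $|u|=1$ then $\Xi(u)=\emptyset$; if $|u|>1$ then $\Xi(u)=\{\langle u,(p\lambda)^{\mathfrak{B}}\rangle,\langle u,(p\mu)^{\mathfrak{B}}\rangle\}$ where $p$ is the unique reduced trail in $u$, $\kappa$ is the pointer of $p$, and $\{\kappa,\lambda,\mu\}=\{0,1,2\}$. A pair $\langle u,v\rangle$ of points is a $\Xi$-pair if $\langle u,v\rangle\in\Xi(u)$ or $\langle v,u\rangle\in\Xi(v)$, and a base-pair if it belongs to $\{\langle (\langle t,\kappa\rangle)^{\mathfrak{B}},(\langle t,\lambda\rangle)^{\mathfrak{B}}\rangle: t\in B,\ t_\mu\leq 0',\ \{\kappa,\lambda,\mu\}=\{0,1,2\}\}$. *)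

theory Defs
  imports Main
begin

text \<open>The Boolean reduct is given by the type class (sup = +, uminus = complement,
  top = 1, bot = 0). cmp = relative product ;, conv = converse, e = identity 1'.
  Axioms R5--R10 of Tarski/Maddux without associativity (i.e. NA), plus the
  weak associativity law ((1' . x);1);1 = (1' . x);(1;1).\<close>

definition WA :: "('a::boolean_algebra \<Rightarrow> 'a \<Rightarrow> 'a) \<Rightarrow> ('a \<Rightarrow> 'a) \<Rightarrow> 'a \<Rightarrow> bool" where
  "WA cmp conv e \<longleftrightarrow>
     (\<forall>x. cmp x e = x) \<and>
     (\<forall>x. conv (conv x) = x) \<and>
     (\<forall>x y. conv (cmp x y) = cmp (conv y) (conv x)) \<and>
     (\<forall>x y z. cmp (sup x y) z = sup (cmp x z) (cmp y z)) \<and>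
     (\<forall>x y. conv (sup x y) = sup (conv x) (conv y)) \<and>
     (\<forall>x y. sup (cmp (conv x) (- cmp x y)) (- y) = - y) \<and>
     (\<forall>x. cmp (cmp (inf e x) top) top = cmp (inf e x) (cmp top top))"

definition atom :: "'a::boolean_algebra \<Rightarrow> bool" where
  "atom a \<longleftrightarrow> a \<noteq> bot \<and> (\<forall>b. b \<le> a \<longrightarrow> b = bot \<or> b = a)"

definition atomic_ba :: "'a::boolean_algebra itself \<Rightarrow> bool" where
  "atomic_ba _ \<longleftrightarrow> (\<forall>x::'a. x \<noteq> bot \<longrightarrow> (\<exists>a. atom a \<and> a \<le> x))"

definition sB :: "('a::boolean_algebra \<Rightarrow> 'a \<Rightarrow> 'a) \<Rightarrow> 'a list set" where
  "sB cmp = {s. length s = 3 \<and> (\<forall>k<3. atom (s ! k)) \<and> s ! 1 \<le> cmp (s ! 2) (s ! 0)}"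

definition sT :: "('a::boolean_algebra \<Rightarrow> 'a \<Rightarrow> 'a) \<Rightarrow> nat \<Rightarrow> ('a list \<times> 'a list) set" where
  "sT cmp k = {(s, t). s \<in> sB cmp \<and> t \<in> sB cmp \<and> s ! k = t ! k}"

text \<open>For distinct k, l < 3, the remaining index is 3 - k - l.\<close>
definition third :: "nat \<Rightarrow> nat \<Rightarrow> nat" where
  "third k l = 3 - k - l"

definition sE :: "('a::boolean_algebra \<Rightarrow> 'a \<Rightarrow> 'a) \<Rightarrow> 'a \<Rightarrow> nat \<Rightarrow> nat \<Rightarrow> 'a list set" where
  "sE cmp e k l = (if k = l then sB cmp else {s \<in> sB cmp. s ! third k l \<le> e})"

text \<open>A trail <t0,k0,...,tn,kn> is the nonempty list [(t0,k0),...,(tn,kn)].\<close>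

definition Tr :: "('a::boolean_algebra \<Rightarrow> 'a \<Rightarrow> 'a) \<Rightarrow> ('a list \<times> nat) list set" where
  "Tr cmp = {p. p \<noteq> [] \<and>
     (\<forall>i<length p. fst (p ! i) \<in> sB cmp \<and> snd (p ! i) < 3) \<and>
     (\<forall>i. Suc i < length p \<longrightarrow> fst (p ! i) \<noteq> fst (p ! Suc i) \<and>
           (fst (p ! i), fst (p ! Suc i)) \<in> sT cmp (snd (p ! i)))}"

definition setptr :: "('a list \<times> nat) list \<Rightarrow> nat \<Rightarrow> ('a list \<times> nat) list" where
  "setptr p l = butlast p @ [(fst (last p), l)]"

definition step :: "('a::boolean_algebra \<Rightarrow> 'a \<Rightarrow> 'a) \<Rightarrow> 'a \<Rightarrow>
    (('a list \<times> nat) list \<times> ('a list \<times> nat) list) set" where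
  "step cmp e =
     {(xs @ [(t, l), (s, l), (t, k)] @ ys, xs @ [(t, k)] @ ys) | xs t l s k ys.
        xs @ [(t, l), (s, l), (t, k)] @ ys \<in> Tr cmp \<and> xs @ [(t, k)] @ ys \<in> Tr cmp}
   \<union> {(xs @ [(t, l), (s, k)], xs @ [(t, k)]) | xs t l s k.
        l \<noteq> k \<and> xs @ [(t, l), (s, k)] \<in> Tr cmp \<and> xs @ [(t, k)] \<in> Tr cmp}
   \<union> {(xs @ [(t, l)], xs @ [(t, k)]) | xs t l k.
        t \<in> sE cmp e l k \<and> xs @ [(t, l)] \<in> Tr cmp \<and> xs @ [(t, k)] \<in> Tr cmp}"

definition approx :: "('a::boolean_algebra \<Rightarrow> 'a \<Rightarrow> 'a) \<Rightarrow> 'a \<Rightarrow>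
    (('a list \<times> nat) list \<times> ('a list \<times> nat) list) set" where
  "approx cmp e = {(p, q). p \<in> Tr cmp \<and> q \<in> Tr cmp \<and>
       (p, q) \<in> (step cmp e \<union> (step cmp e)\<inverse>)\<^sup>*}"

definition cls :: "('a::boolean_algebra \<Rightarrow> 'a \<Rightarrow> 'a) \<Rightarrow> 'a \<Rightarrow>
    ('a list \<times> nat) list \<Rightarrow> ('a list \<times> nat) list set" where
  "cls cmp e p = approx cmp e `` {p}"

definition reduced :: "('a::boolean_algebra \<Rightarrow> 'a \<Rightarrow> 'a) \<Rightarrow> 'a \<Rightarrow> ('a list \<times> nat) list \<Rightarrow> bool" where
  "reduced cmp e p \<longleftrightarrow>
     (length p = 1 \<longrightarrow> (\<forall>l<3. fst (p ! 0) \<in> sE cmp e (snd (p ! 0)) l \<longrightarrow> snd (p ! 0) \<le> l)) \<and>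
     (length p > 1 \<longrightarrow>
        snd (p ! (length p - 2)) = snd (p ! (length p - 1)) \<and>
        (\<forall>l<3. fst (p ! (length p - 1)) \<in> sE cmp e (snd (p ! (length p - 1))) l
                 \<longleftrightarrow> snd (p ! (length p - 1)) = l)) \<and>
     (\<forall>i. i + 2 < length p \<longrightarrow> fst (p ! i) \<noteq> fst (p ! (i + 2)) \<or> snd (p ! i) \<noteq> snd (p ! (i + 1)))"

definition sU :: "('a::boolean_algebra \<Rightarrow> 'a \<Rightarrow> 'a) \<Rightarrow> 'a \<Rightarrow> ('a list \<times> nat) list set set" where
  "sU cmp e = cls cmp e ` Tr cmp"

definition rep :: "('a::boolean_algebra \<Rightarrow> 'a \<Rightarrow> 'a) \<Rightarrow> 'a \<Rightarrow> ('a list \<times> nat) list set \<Rightarrow> ('a list \<times> nat) list" where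
  "rep cmp e u = (THE p. p \<in> u \<and> reduced cmp e p)"

definition ulen :: "('a::boolean_algebra \<Rightarrow> 'a \<Rightarrow> 'a) \<Rightarrow> 'a \<Rightarrow> ('a list \<times> nat) list set \<Rightarrow> nat" where
  "ulen cmp e u = length (rep cmp e u)"

definition sV :: "('a::boolean_algebra \<Rightarrow> 'a \<Rightarrow> 'a) \<Rightarrow> 'a \<Rightarrow>
    (('a list \<times> nat) list set \<times> ('a list \<times> nat) list set \<times> ('a list \<times> nat) list set) set" where
  "sV cmp e = {(cls cmp e (setptr p 0), cls cmp e (setptr p 1), cls cmp e (setptr p 2)) | p. p \<in> Tr cmp}"

definition Xi :: "('a::boolean_algebra \<Rightarrow> 'a \<Rightarrow> 'a) \<Rightarrow> 'a \<Rightarrow> ('a list \<times> nat) list set \<Rightarrow>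
    (('a list \<times> nat) list set \<times> ('a list \<times> nat) list set) set" where
  "Xi cmp e u = (if ulen cmp e u = 1 then {}
     else {(u, cls cmp e (setptr (rep cmp e u) l)) | l. l < 3 \<and> l \<noteq> snd (last (rep cmp e u))})"

definition Xi_pair where
  "Xi_pair cmp e u v \<longleftrightarrow> (u, v) \<in> Xi cmp e u \<or> (v, u) \<in> Xi cmp e v"

definition base_pair :: "('a::boolean_algebra \<Rightarrow> 'a \<Rightarrow> 'a) \<Rightarrow> 'a \<Rightarrow>
    ('a list \<times> nat) list set \<Rightarrow> ('a list \<times> nat) list set \<Rightarrow> bool" where
  "base_pair cmp e u v \<longleftrightarrow> (\<exists>t \<in> sB cmp. \<exists>k l m. k < 3 \<and> l < 3 \<and> m < 3 \<and> distinct [k, l, m] \<and>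
      t ! m \<le> - e \<and> u = cls cmp e [(t, k)] \<and> v = cls cmp e [(t, l)])"

definition perm3 :: "'b \<times> 'b \<times> 'b \<Rightarrow> 'b \<times> 'b \<times> 'b \<Rightarrow> bool" where
  "perm3 x y \<longleftrightarrow> (case x of (a, b, c) \<Rightarrow>
     y \<in> {(a, b, c), (a, c, b), (b, a, c), (b, c, a), (c, a, b), (c, b, a)})"

end

theory Submission
  imports Defs
begin

(* The relation \<approx> is decided by a normal form. Freely reduce the word of edges of a trail
   (rule (1) cancels a backtrack), then, as long as rule (3) can move the pointer at the end
   off the label of the last edge, delete that edge by rule (2). The result is invariant under
   the three rules, and on a reduced trail it returns the trail itself. Hence the reduced trail
   of a point is unique and shortest in its class, which makes \<Xi> computable.

   For a triple <p0, p1, p2> one may assume p has no backtracks. If |p| = 1 the three points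
   are pairwise equal or base-pairs. Otherwise let k be the label of the last edge: for the
   pointers l \<noteq> k rule (2) drops the last vertex, so by induction on |p| any two points of
   the triple are equal or form a \<Xi>-pair or a base-pair. The point p k either equals another
   one (when rule (3) applies at the last vertex) or p k is reduced, and then \<Xi>(p k) consists
   of the pairs to the two other points, which are strictly shorter and so distinct from it. *)

section \<open>Weakly associative algebras and the suitable structure\<close>

lemma WA_comp_mono_left:
  assumes "WA cmp conv e" and "x \<le> y"
  shows "cmp x z \<le> cmp y z"
  using assms unfolding WA_def by (metis sup.absorb_iff2)

lemma WA_conv_mono:
  assumes "WA cmp conv e" and "x \<le> y"
  shows "conv x \<le> conv y"
  using assms unfolding WA_def by (metis sup.absorb_iff2)

lemma WA_comp_mono_right:
  assumes W: "WA cmp conv e" and "x \<le> y"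
  shows "cmp z x \<le> cmp z y"
proof -
  have conv_comp: "cmp a b = conv (cmp (conv b) (conv a))" for a b
    using W unfolding WA_def by metis
  show ?thesis
    unfolding conv_comp[of z]
    by (intro WA_conv_mono[OF W] WA_comp_mono_left[OF W] WA_conv_mono[OF W] assms(2))
qed

lemma WA_comp_right_id: "WA cmp conv e \<Longrightarrow> cmp x e = x"
  by (simp add: WA_def)

lemma WA_comp_left_id:
  assumes W: "WA cmp conv e"
  shows "cmp e x = x"
proof -
  have "conv e = e"
    using W unfolding WA_def by metis
  then show ?thesis
    using W unfolding WA_def by metis
qed

lemma atom_eqI: "atom a \<Longrightarrow> atom b \<Longrightarrow> a \<le> b \<Longrightarrow> a = b"
  unfolding atom_def by blast

lemma atom_le_or_le_compl:
  assumes "atom a"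
  shows "a \<le> e \<or> a \<le> - e"
  using assms unfolding atom_def by (metis inf.cobounded1 inf_commute inf_shunt)

lemma less_3_cases: "(k::nat) < 3 \<Longrightarrow> k = 0 \<or> k = 1 \<or> k = 2"
  by auto

lemma third_eq:
  "i < 3 \<Longrightarrow> j < 3 \<Longrightarrow> k < 3 \<Longrightarrow> distinct [i, j, k] \<Longrightarrow> third i j = k"
  using less_3_cases[of i] less_3_cases[of j] less_3_cases[of k] by (auto simp: third_def)

lemma third_commute: "third i j = third j i"
  by (simp add: third_def)

lemma third_distinct: "i < 3 \<Longrightarrow> j < 3 \<Longrightarrow> i \<noteq> j \<Longrightarrow> third i j < 3 \<and> distinct [i, j, third i j]"
  using less_3_cases[of i] less_3_cases[of j] by (auto simp: third_def)

lemma other_two_indices: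
  assumes "k < (3::nat)"
  obtains l m where "l < 3" "m < 3" "distinct [k, l, m]" "\<And>n. n < 3 \<Longrightarrow> n = k \<or> n = l \<or> n = m"
proof -
  consider "k = 0" | "k = 1" | "k = 2"
    using less_3_cases[OF assms] by blast
  then show thesis
  proof cases
    case 1
    then show ?thesis using less_3_cases by (intro that[of 1 2]) auto
  next
    case 2
    then show ?thesis using less_3_cases by (intro that[of 0 2]) auto
  next
    case 3
    then show ?thesis using less_3_cases by (intro that[of 0 1]) auto
  qed
qed

lemma sB_identity_coord:
  assumes W: "WA cmp conv e" and t: "t \<in> sB cmp"
    and "i < 3" "j < 3" "k < 3" "distinct [i, j, k]" and "t ! i \<le> e" "t ! j \<le> e"
  shows "t ! k \<le> e"
proof -
  have atoms: "atom (t ! 0)" "atom (t ! 1)" "atom (t ! 2)" and comp: "t ! 1 \<le> cmp (t ! 2) (t ! 0)"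
    using t unfolding sB_def by auto
  have right: "t ! 1 = t ! 2" if "t ! 0 \<le> e"
  proof -
    have "t ! 1 \<le> cmp (t ! 2) e"
      using comp WA_comp_mono_right[OF W that] by (rule order_trans)
    then show ?thesis
      using atoms WA_comp_right_id[OF W] by (metis atom_eqI)
  qed
  have left: "t ! 1 = t ! 0" if "t ! 2 \<le> e"
  proof -
    have "t ! 1 \<le> cmp e (t ! 0)"
      using comp WA_comp_mono_left[OF W that] by (rule order_trans)
    then show ?thesis
      using atoms WA_comp_left_id[OF W] by (metis atom_eqI)
  qed
  show ?thesis
    using assms(3-) less_3_cases[of i] less_3_cases[of j] less_3_cases[of k] right left by auto
qed

definition ptr_class :: "('a::boolean_algebra \<Rightarrow> 'a \<Rightarrow> 'a) \<Rightarrow> 'a \<Rightarrow> 'a list \<Rightarrow> nat \<Rightarrow> nat set" where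
  "ptr_class cmp e t k = {l. l < 3 \<and> t \<in> sE cmp e k l}"

lemma ptr_class_iff:
  "t \<in> sB cmp \<Longrightarrow> l \<in> ptr_class cmp e t k \<longleftrightarrow> l < 3 \<and> (l = k \<or> t ! third k l \<le> e)"
  unfolding ptr_class_def sE_def by auto

lemma ptr_class_self: "t \<in> sB cmp \<Longrightarrow> k < 3 \<Longrightarrow> k \<in> ptr_class cmp e t k"
  by (simp add: ptr_class_iff)

lemma ptr_class_sym:
  "t \<in> sB cmp \<Longrightarrow> k < 3 \<Longrightarrow> l \<in> ptr_class cmp e t k \<Longrightarrow> k \<in> ptr_class cmp e t l"
  by (auto simp: ptr_class_iff third_commute)

lemma ptr_class_trans:
  assumes W: "WA cmp conv e" and t: "t \<in> sB cmp" and k: "k < 3"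
    and l: "l \<in> ptr_class cmp e t k" and m: "m \<in> ptr_class cmp e t l"
  shows "m \<in> ptr_class cmp e t k"
proof (cases "distinct [k, l, m]")
  case True
  have lm: "l < 3" "m < 3"
    using l m ptr_class_iff[OF t] by auto
  have thirds: "third k l = m" "third l m = k" "third k m = l"
    using k lm True by (auto intro: third_eq)
  then have "t ! m \<le> e" "t ! k \<le> e"
    using l m True ptr_class_iff[OF t] by auto
  then have "t ! l \<le> e"
    using sB_identity_coord[OF W t, of m k l] k lm True by auto
  then show ?thesis
    using ptr_class_iff[OF t] lm thirds by auto
next
  case False
  then show ?thesis
    using l m ptr_class_sym[OF t k l] ptr_class_self[OF t k] by auto
qed

lemma ptr_class_eq:
  assumes W: "WA cmp conv e" and t: "t \<in> sB cmp" and k: "k < 3" and l: "l \<in> ptr_class cmp e t k"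
  shows "ptr_class cmp e t l = ptr_class cmp e t k"
proof -
  have "l < 3" "k \<in> ptr_class cmp e t l"
    using l ptr_class_iff[OF t] ptr_class_sym[OF t k l] by auto
  then show ?thesis
    using ptr_class_trans[OF W t] k l by blast
qed

text \<open>Moving the pointer from k to j at t uses an identity atom at position l,
  which s shares.\<close>

lemma ptr_class_transfer:
  assumes W: "WA cmp conv e" and s: "s \<in> sB cmp" and t: "t \<in> sB cmp"
    and st: "s ! l = t ! l" and "l < 3" and k: "k < 3" and "j \<noteq> l" "k \<noteq> l"
    and j: "j \<in> ptr_class cmp e t k"
  shows "ptr_class cmp e s j = ptr_class cmp e s k"
proof (cases "j = k")
  case False
  have "j < 3" "t ! third k j \<le> e"
    using j False ptr_class_iff[OF t] by auto
  moreover have "third k j = l"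
    using False assms(5,7,8) k \<open>j < 3\<close> by (intro third_eq) auto
  ultimately have "j \<in> ptr_class cmp e s k"
    using st ptr_class_iff[OF s] by auto
  then show ?thesis
    using ptr_class_eq[OF W s k] by blast
qed simp

section \<open>Trails\<close>

definition trail_link :: "('a::boolean_algebra \<Rightarrow> 'a \<Rightarrow> 'a) \<Rightarrow> 'a list \<times> nat \<Rightarrow> 'a list \<times> nat \<Rightarrow> bool" where
  "trail_link cmp a b \<longleftrightarrow> fst a \<noteq> fst b \<and> (fst a, fst b) \<in> sT cmp (snd a)"

lemma Tr_iff:
  "p \<in> Tr cmp \<longleftrightarrow>
     p \<noteq> [] \<and> (\<forall>a\<in>set p. fst a \<in> sB cmp \<and> snd a < 3) \<and> successively (trail_link cmp) p"
  unfolding Tr_def successively_conv_nth all_set_conv_all_nth trail_link_def by blast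

lemma Tr_singleton [simp]: "[(t, k)] \<in> Tr cmp \<longleftrightarrow> t \<in> sB cmp \<and> k < 3"
  by (simp add: Tr_iff)

lemma Tr_append_Cons_iff: "xs @ a # ys \<in> Tr cmp \<longleftrightarrow> xs @ [a] \<in> Tr cmp \<and> a # ys \<in> Tr cmp"
  by (auto simp: Tr_iff successively_append_iff)

lemma Tr_Cons_Cons_iff:
  "a # b # r \<in> Tr cmp \<longleftrightarrow> [a] \<in> Tr cmp \<and> trail_link cmp a b \<and> b # r \<in> Tr cmp"
  by (auto simp: Tr_iff)

lemma Tr_snoc_ptr: "xs @ [(t, l)] \<in> Tr cmp \<Longrightarrow> k < 3 \<Longrightarrow> xs @ [(t, k)] \<in> Tr cmp"
  by (auto simp: Tr_iff successively_append_iff trail_link_def)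

lemma Tr_snocD: "xs @ [(t, k)] \<in> Tr cmp \<Longrightarrow> t \<in> sB cmp \<and> k < 3"
  by (simp add: Tr_iff)

lemma Tr_nonempty: "p \<in> Tr cmp \<Longrightarrow> p \<noteq> []"
  by (simp add: Tr_iff)

lemma setptr_snoc [simp]: "setptr (xs @ [(t, k)]) l = xs @ [(t, l)]"
  by (simp add: setptr_def)

lemma setptr_snoc2 [simp]: "setptr (xs @ [a, (t, k)]) l = xs @ [a, (t, l)]"
  by (simp add: setptr_def butlast_append)

lemma setptr_append: "ys \<noteq> [] \<Longrightarrow> setptr (xs @ ys) l = xs @ setptr ys l"
  by (simp add: setptr_def butlast_append)

lemma Tr_setptr:
  assumes "p \<in> Tr cmp" and "l < 3"
  shows "setptr p l \<in> Tr cmp"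
proof -
  have "butlast p @ [(fst (last p), snd (last p))] \<in> Tr cmp"
    using assms(1) Tr_nonempty[OF assms(1)] by simp
  then show ?thesis
    unfolding setptr_def using assms(2) by (rule Tr_snoc_ptr)
qed

lemma trail_last_cases:
  assumes "p \<noteq> []"
  obtains (single) t k where "p = [(t, k)]"
    | (snoc2) r t' k' t k where "p = r @ [(t', k'), (t, k)]"
proof (cases p rule: rev_cases)
  case (snoc ys a)
  show ?thesis
  proof (cases ys rule: rev_cases)
    case Nil
    then show ?thesis
      using snoc single by (cases a) auto
  next
    case (snoc r b)
    then show ?thesis
      using \<open>p = ys @ [a]\<close> snoc2 by (cases a, cases b) auto
  qed
qed (use assms in simp)

fun edges :: "('b \<times> nat) list \<Rightarrow> ('b \<times> nat \<times> 'b) list" where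
  "edges (a # b # r) = (fst a, snd a, fst b) # edges (b # r)"
| "edges _ = []"

lemma edges_append_Cons: "edges (xs @ a # ys) = edges (xs @ [a]) @ edges (a # ys)"
proof (induction xs)
  case (Cons x xs)
  then show ?case by (cases xs) auto
qed simp

lemma edges_snoc_ptr: "edges (xs @ [(t, l)]) = edges (xs @ [(t, k)])"
proof (induction xs)
  case (Cons x xs)
  then show ?case by (cases xs) auto
qed simp

lemma length_edges [simp]: "length (edges p) = length p - 1"
  by (induction p rule: edges.induct) auto

lemma nth_edges: "Suc i < length p \<Longrightarrow> edges p ! i = (fst (p ! i), snd (p ! i), fst (p ! Suc i))"
  by (induction p arbitrary: i rule: edges.induct) (auto simp: nth_Cons split: nat.split)

lemma edges_inj:
  "p \<noteq> [] \<Longrightarrow> q \<noteq> [] \<Longrightarrow> fst (hd p) = fst (hd q) \<Longrightarrow> edges p = edges q \<Longrightarrow>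
    snd (last p) = snd (last q) \<Longrightarrow> p = q"
proof (induction p arbitrary: q rule: edges.induct)
  case (1 a b r)
  then obtain c d r' where q: "q = c # d # r'"
    by (cases q rule: edges.cases) auto
  with 1 have "b # r = d # r'"
    by (intro "1.IH") auto
  moreover have "a = c"
    using 1 q by (cases a, cases c) auto
  ultimately show ?case
    using q by simp
next
  case ("2_2" a)
  then show ?case
    by (cases q rule: edges.cases) (auto simp: prod_eq_iff)
qed simp

section \<open>Edge words and their free reduction\<close>

fun path_from :: "'b \<Rightarrow> ('b \<times> nat \<times> 'b) list \<Rightarrow> bool" where
  "path_from v [] = True"
| "path_from v ((a, l, b) # E) = (a = v \<and> path_from b E)"

fun path_end :: "'b \<Rightarrow> ('b \<times> nat \<times> 'b) list \<Rightarrow> 'b" where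
  "path_end v [] = v"
| "path_end v ((a, l, b) # E) = path_end b E"

lemma path_from_append: "path_from v (E @ F) \<longleftrightarrow> path_from v E \<and> path_from (path_end v E) F"
  by (induction v E rule: path_from.induct) auto

lemma path_end_append [simp]: "path_end v (E @ F) = path_end (path_end v E) F"
  by (induction v E rule: path_end.induct) auto

lemma path_edges:
  "p \<noteq> [] \<Longrightarrow> path_from (fst (hd p)) (edges p) \<and> path_end (fst (hd p)) (edges p) = fst (last p)"
  by (induction p rule: edges.induct) auto

fun einv :: "'b \<times> nat \<times> 'b \<Rightarrow> 'b \<times> nat \<times> 'b" where
  "einv (a, l, b) = (b, l, a)"

lemma einv_einv [simp]: "einv (einv x) = x"
  by (cases x) auto

lemma einv_eq_iff: "einv x = y \<longleftrightarrow> x = einv y"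
  by auto

definition cancel_free :: "('b \<times> nat \<times> 'b) list \<Rightarrow> bool" where
  "cancel_free E \<longleftrightarrow> successively (\<lambda>x y. y \<noteq> einv x) E"

definition cancel_push :: "('b \<times> nat \<times> 'b) list \<Rightarrow> 'b \<times> nat \<times> 'b \<Rightarrow> ('b \<times> nat \<times> 'b) list" where
  "cancel_push S x = (case S of [] \<Rightarrow> [x] | y # S' \<Rightarrow> if y = einv x then S' else x # S)"

text \<open>The reduced word is kept as a stack: its last edge comes first.\<close>

definition free_red :: "('b \<times> nat \<times> 'b) list \<Rightarrow> ('b \<times> nat \<times> 'b) list" where
  "free_red E = foldl cancel_push [] E"

lemma cancel_free_cancel_push: "cancel_free S \<Longrightarrow> cancel_free (cancel_push S x)"
  by (cases S) (auto simp: cancel_free_def cancel_push_def successively_Cons einv_eq_iff)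

lemma cancel_push_inverse: "cancel_free S \<Longrightarrow> cancel_push (cancel_push S x) (einv x) = S"
  by (cases S rule: remdups_adj.cases) (auto simp: cancel_free_def cancel_push_def einv_eq_iff)

lemma cancel_free_free_red: "cancel_free (free_red E)"
proof -
  have "cancel_free (foldl cancel_push S E)" if "cancel_free S" for S
    using that by (induction E arbitrary: S) (auto simp: cancel_free_cancel_push)
  then show ?thesis
    by (simp add: free_red_def cancel_free_def)
qed

lemma free_red_snoc: "free_red (E @ [x]) = cancel_push (free_red E) x"
  by (simp add: free_red_def)

lemma free_red_append_inverse: "free_red (E @ [x, einv x] @ F) = free_red (E @ F)"
  by (simp add: free_red_def cancel_push_inverse[OF cancel_free_free_red[unfolded free_red_def]])

lemma free_red_cancel_free: "cancel_free E \<Longrightarrow> free_red E = rev E"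
proof (induction E rule: rev_induct)
  case (snoc x E)
  then have "cancel_free E"
    by (simp add: cancel_free_def successively_append_iff)
  with snoc.IH have "free_red (E @ [x]) = cancel_push (rev E) x"
    by (simp add: free_red_snoc)
  also have "\<dots> = x # rev E"
    using snoc.prems
    by (cases E rule: rev_cases)
      (auto simp: cancel_push_def cancel_free_def successively_append_iff einv_eq_iff)
  finally show ?case by simp
qed (simp add: free_red_def)

lemma length_free_red: "length (free_red E) \<le> length E"
proof -
  have "length (foldl cancel_push S E) \<le> length S + length E" for S
  proof (induction E arbitrary: S)
    case (Cons x E)
    have "length (cancel_push S x) \<le> Suc (length S)"
      by (cases S) (auto simp: cancel_push_def)
    with Cons.IH[of "cancel_push S x"] show ?case by simp
  qed simp
  from this[of "[]"] show ?thesis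
    by (simp add: free_red_def)
qed

lemma path_free_red:
  assumes "path_from v E"
  shows "path_from v (rev (free_red E)) \<and> path_end v (rev (free_red E)) = path_end v E"
proof -
  have push:
    "path_from v (rev (cancel_push S (a, l, b))) \<and> path_end v (rev (cancel_push S (a, l, b))) = b"
    if "path_from v (rev S)" "a = path_end v (rev S)" for S a l b
  proof (cases S)
    case (Cons y S')
    then show ?thesis
      using that by (cases y) (auto simp: cancel_push_def path_from_append)
  qed (use that in \<open>simp add: cancel_push_def\<close>)
  have "path_from v (rev (foldl cancel_push S E)) \<and>
      path_end v (rev (foldl cancel_push S E)) = path_end (path_end v (rev S)) E"
    if "path_from v (rev S)" "path_from (path_end v (rev S)) E" for S
    using that
  proof (induction E arbitrary: S)
    case (Cons x E)
    then show ?case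
      using push[OF Cons.prems(1)] Cons.IH[of "cancel_push S x"] by (cases x) auto
  qed simp
  then show ?thesis
    using assms by (simp add: free_red_def)
qed

section \<open>A complete invariant of trail equivalence\<close>

text \<open>Normal form of a trail starting at st whose reduced edge stack is S and whose pointer
  is k: while the pointer can be moved by rule (3) off the label of the last edge, that edge
  is deleted by rule (2).\<close>

fun retract :: "('a::boolean_algebra \<Rightarrow> 'a \<Rightarrow> 'a) \<Rightarrow> 'a \<Rightarrow> 'a list \<Rightarrow>
    ('a list \<times> nat \<times> 'a list) list \<Rightarrow> nat \<Rightarrow> ('a list \<times> nat \<times> 'a list) list \<times> nat" where
  "retract cmp e st [] k = ([], Min (ptr_class cmp e st k))"
| "retract cmp e st ((a, l, b) # S) k =
     (if \<exists>j \<in> ptr_class cmp e b k. j \<noteq> l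
      then retract cmp e st S (LEAST j. j \<in> ptr_class cmp e b k \<and> j \<noteq> l)
      else ((a, l, b) # S, k))"

lemma length_retract: "length (fst (retract cmp e st S k)) \<le> length S"
  by (induction cmp e st S k rule: retract.induct) (auto intro: le_SucI)

lemma retract_cong:
  assumes "path_end st (rev S) \<in> sB cmp" and "j < 3" and "k < 3"
    and "ptr_class cmp e (path_end st (rev S)) j = ptr_class cmp e (path_end st (rev S)) k"
  shows "retract cmp e st S j = retract cmp e st S k"
proof (cases S)
  case (Cons y S')
  obtain a l b where y: "y = (a, l, b)"
    by (cases y)
  have b: "b \<in> sB cmp" "ptr_class cmp e b j = ptr_class cmp e b k"
    using assms Cons y by auto
  show ?thesis
  proof (cases "\<exists>i \<in> ptr_class cmp e b k. i \<noteq> l")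
    case False
    then have "j = l" "k = l"
      using b ptr_class_self[OF b(1)] assms(2,3) by blast+
    then show ?thesis by simp
  qed (use Cons y b in simp)
qed (use assms in simp)

lemma retract_cancel_push:
  assumes W: "WA cmp conv e" and path: "path_from st (rev S)" "path_end st (rev S) = t"
    and t: "t \<in> sB cmp" and s: "s \<in> sB cmp" and ts: "t ! l = s ! l"
    and "l < 3" "k < 3" "l \<noteq> k"
  shows "retract cmp e st (cancel_push S (t, l, s)) k = retract cmp e st S k"
proof (cases "\<exists>S'. S = (s, l, t) # S'")
  case True
  then obtain S' where S: "S = (s, l, t) # S'"
    by blast
  have "path_end st (rev S') = s"
    using path S by (simp add: path_from_append)
  define j where "j = (LEAST j. j \<in> ptr_class cmp e t k \<and> j \<noteq> l)"
  have ex: "\<exists>j \<in> ptr_class cmp e t k. j \<noteq> l"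
    using ptr_class_self[OF t \<open>k < 3\<close>] \<open>l \<noteq> k\<close> by (metis)
  then have j: "j \<in> ptr_class cmp e t k" "j \<noteq> l"
    unfolding j_def by (metis (mono_tags, lifting) LeastI_ex)+
  then have "ptr_class cmp e s j = ptr_class cmp e s k"
    using ptr_class_transfer[OF W s t _ \<open>l < 3\<close> \<open>k < 3\<close>] ts \<open>l \<noteq> k\<close> by auto
  then have "retract cmp e st S' j = retract cmp e st S' k"
    using retract_cong[of st S' cmp j k e] \<open>path_end st (rev S') = s\<close> s j(1) \<open>k < 3\<close> ptr_class_iff[OF t]
    by simp
  then show ?thesis
    using S ex by (simp add: cancel_push_def j_def)
next
  case False
  then have push: "cancel_push S (t, l, s) = (t, l, s) # S"
    by (cases S) (auto simp: cancel_push_def)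
  define j where "j = (LEAST j. j \<in> ptr_class cmp e s k \<and> j \<noteq> l)"
  have ex: "\<exists>j \<in> ptr_class cmp e s k. j \<noteq> l"
    using ptr_class_self[OF s \<open>k < 3\<close>] \<open>l \<noteq> k\<close> by (metis)
  then have j: "j \<in> ptr_class cmp e s k" "j \<noteq> l"
    unfolding j_def by (metis (mono_tags, lifting) LeastI_ex)+
  then have "ptr_class cmp e t j = ptr_class cmp e t k"
    using ptr_class_transfer[OF W t s _ \<open>l < 3\<close> \<open>k < 3\<close>] ts \<open>l \<noteq> k\<close> by auto
  then have "retract cmp e st S j = retract cmp e st S k"
    using retract_cong[of st S cmp j k e] path(2) t j(1) \<open>k < 3\<close> ptr_class_iff[OF s] by simp
  then show ?thesis
    using push ex by (simp add: j_def)
qed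

definition trail_nf :: "('a::boolean_algebra \<Rightarrow> 'a \<Rightarrow> 'a) \<Rightarrow> 'a \<Rightarrow> ('a list \<times> nat) list \<Rightarrow>
    'a list \<times> ('a list \<times> nat \<times> 'a list) list \<times> nat" where
  "trail_nf cmp e p = (fst (hd p), retract cmp e (fst (hd p)) (free_red (edges p)) (snd (last p)))"

lemma fst_hd_append_Cons: "fst (hd (xs @ (t, l) # ys)) = fst (hd (xs @ (t, k) # zs))"
  by (cases xs) auto

lemma path_free_red_edges:
  assumes "p \<noteq> []"
  shows "path_from (fst (hd p)) (rev (free_red (edges p)))"
    and "path_end (fst (hd p)) (rev (free_red (edges p))) = fst (last p)"
  using path_free_red path_edges[OF assms] by metis+

lemma trail_nf_backtrack:
  "trail_nf cmp e (xs @ [(t, l), (s, l), (t, k)] @ ys) = trail_nf cmp e (xs @ [(t, k)] @ ys)"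
  (is "trail_nf cmp e ?p = trail_nf cmp e ?q")
proof -
  have "edges ?p = edges (xs @ [(t, l)]) @ [(t, l, s), einv (t, l, s)] @ edges ((t, k) # ys)"
    using edges_append_Cons[of xs "(t, l)" "(s, l) # (t, k) # ys"] by simp
  moreover have "edges ?q = edges (xs @ [(t, l)]) @ edges ((t, k) # ys)"
    using edges_append_Cons[of xs "(t, k)" ys] edges_snoc_ptr[of xs t k l] by simp
  ultimately have "free_red (edges ?p) = free_red (edges ?q)"
    by (simp only: free_red_append_inverse)
  moreover have "fst (hd ?p) = fst (hd ?q)"
    using fst_hd_append_Cons[of xs t l _ k ys] by simp
  moreover have "snd (last ?p) = snd (last ?q)"
    by simp
  ultimately show ?thesis
    unfolding trail_nf_def by simp
qed

lemma trail_nf_drop_last: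
  assumes W: "WA cmp conv e" and "l \<noteq> k" and p: "xs @ [(t, l), (s, k)] \<in> Tr cmp"
  shows "trail_nf cmp e (xs @ [(t, l), (s, k)]) = trail_nf cmp e (xs @ [(t, k)])"
proof -
  have "[(t, l), (s, k)] \<in> Tr cmp"
    using p Tr_append_Cons_iff[of xs "(t, l)" "[(s, k)]" cmp] by simp
  then have t: "t \<in> sB cmp" and s: "s \<in> sB cmp" and "l < 3" "k < 3" and ts: "t ! l = s ! l"
    by (auto simp: Tr_Cons_Cons_iff trail_link_def sT_def)
  define st where "st = fst (hd (xs @ [(t, k)]))"
  define S where "S = free_red (edges (xs @ [(t, k)]))"
  have "edges (xs @ [(t, l), (s, k)]) = edges (xs @ [(t, k)]) @ [(t, l, s)]"
    using edges_append_Cons[of xs "(t, l)" "[(s, k)]"] edges_snoc_ptr[of xs t l k] by simp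
  then have "free_red (edges (xs @ [(t, l), (s, k)])) = cancel_push S (t, l, s)"
    by (simp add: S_def free_red_snoc)
  moreover have "fst (hd (xs @ [(t, l), (s, k)])) = st"
    unfolding st_def using fst_hd_append_Cons[of xs t l "[(s, k)]" k "[]"] by simp
  moreover have "path_from st (rev S)" "path_end st (rev S) = t"
    unfolding st_def S_def using path_free_red_edges[of "xs @ [(t, k)]"] by auto
  ultimately show ?thesis
    unfolding trail_nf_def
    using retract_cancel_push[OF W _ _ t s ts \<open>l < 3\<close> \<open>k < 3\<close> \<open>l \<noteq> k\<close>]
    by (simp add: st_def S_def)
qed

lemma trail_nf_switch_ptr:
  assumes W: "WA cmp conv e" and tE: "t \<in> sE cmp e l k"
    and p: "xs @ [(t, l)] \<in> Tr cmp" and "k < 3"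
  shows "trail_nf cmp e (xs @ [(t, l)]) = trail_nf cmp e (xs @ [(t, k)])"
proof -
  have t: "t \<in> sB cmp" and "l < 3"
    using Tr_snocD[OF p] by auto
  define st where "st = fst (hd (xs @ [(t, l)]))"
  define S where "S = free_red (edges (xs @ [(t, l)]))"
  have "path_end st (rev S) = t"
    unfolding st_def S_def using path_free_red_edges[of "xs @ [(t, l)]"] by auto
  moreover have "ptr_class cmp e t k = ptr_class cmp e t l"
    using ptr_class_eq[OF W t \<open>l < 3\<close>] tE \<open>k < 3\<close> by (simp add: ptr_class_def)
  ultimately have "retract cmp e st S l = retract cmp e st S k"
    using retract_cong[of st S cmp l k e] t \<open>l < 3\<close> \<open>k < 3\<close> by simp
  moreover have "fst (hd (xs @ [(t, k)])) = st"
    unfolding st_def using fst_hd_append_Cons[of xs t k "[]" l "[]"] by simp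
  ultimately show ?thesis
    unfolding trail_nf_def S_def using edges_snoc_ptr[of xs t l k] by (simp add: st_def[symmetric])
qed

lemma trail_nf_step:
  assumes W: "WA cmp conv e" and "(p, q) \<in> step cmp e"
  shows "trail_nf cmp e p = trail_nf cmp e q"
  using assms(2) unfolding step_def
proof (elim UnE CollectE exE conjE)
  fix xs t l k
  assume pq: "(p, q) = (xs @ [(t, l)], xs @ [(t, k)])" and "t \<in> sE cmp e l k"
    and "xs @ [(t, l)] \<in> Tr cmp" "xs @ [(t, k)] \<in> Tr cmp"
  moreover from this have "k < 3"
    by (simp add: Tr_snocD)
  ultimately show ?thesis
    using trail_nf_switch_ptr[OF W] by simp
qed (auto simp: trail_nf_backtrack[simplified] trail_nf_drop_last[OF W])

lemma approx_trail_nf: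
  assumes W: "WA cmp conv e" and "(p, q) \<in> approx cmp e"
  shows "trail_nf cmp e p = trail_nf cmp e q"
proof -
  have "(p, q) \<in> (step cmp e \<union> (step cmp e)\<inverse>)\<^sup>*"
    using assms(2) by (simp add: approx_def)
  then show ?thesis
    by (induction rule: rtrancl_induct) (auto dest: trail_nf_step[OF W])
qed

lemma cancel_free_edges_reduced:
  assumes "reduced cmp e p"
  shows "cancel_free (edges p)"
  unfolding cancel_free_def successively_conv_nth
proof (intro allI impI)
  fix i
  assume "Suc i < length (edges p)"
  then have "i + 2 < length p"
    by simp
  then have "fst (p ! i) \<noteq> fst (p ! (i + 2)) \<or> snd (p ! i) \<noteq> snd (p ! (i + 1))"
    using assms unfolding reduced_def by blast
  then show "edges p ! Suc i \<noteq> einv (edges p ! i)"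
    using \<open>i + 2 < length p\<close> by (auto simp: nth_edges)
qed

lemma trail_nf_reduced:
  assumes p: "p \<in> Tr cmp" and red: "reduced cmp e p"
  shows "trail_nf cmp e p = (fst (hd p), rev (edges p), snd (last p))"
  using Tr_nonempty[OF p]
proof (cases rule: trail_last_cases)
  case (single t k)
  have "Min (ptr_class cmp e t k) = k"
  proof (rule Min_eqI)
    show "finite (ptr_class cmp e t k)"
      by (simp add: ptr_class_def)
    show "k \<in> ptr_class cmp e t k"
      using p single by (simp add: ptr_class_self)
  qed (use red single in \<open>auto simp: reduced_def ptr_class_def\<close>)
  then show ?thesis
    using single by (simp add: trail_nf_def free_red_def)
next
  case (snoc2 r t' k' t k)
  have "k' = k" and only_k: "\<forall>l<3. t \<in> sE cmp e k l \<longleftrightarrow> k = l"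
    using red snoc2 by (auto simp: reduced_def nth_append)
  have "t \<in> sB cmp" "k < 3"
    using p snoc2 Tr_snocD[of "r @ [(t', k')]"] by auto
  with only_k have "ptr_class cmp e t k = {k}"
    by (auto simp: ptr_class_def sE_def)
  moreover have "rev (edges p) = (t', k', t) # rev (edges (r @ [(t', k')]))"
    using snoc2 edges_append_Cons[of r "(t', k')" "[(t, k)]"] by simp
  ultimately have
    "retract cmp e (fst (hd p)) (rev (edges p)) (snd (last p)) = (rev (edges p), snd (last p))"
    using \<open>k' = k\<close> snoc2 by simp
  then show ?thesis
    using free_red_cancel_free[OF cancel_free_edges_reduced[OF red]] by (simp add: trail_nf_def)
qed

lemma reduced_unique:
  assumes W: "WA cmp conv e" and "p \<in> Tr cmp" "q \<in> Tr cmp"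
    and "reduced cmp e p" "reduced cmp e q" and "(p, q) \<in> approx cmp e"
  shows "p = q"
proof -
  have "(fst (hd p), rev (edges p), snd (last p)) = (fst (hd q), rev (edges q), snd (last q))"
    using approx_trail_nf[OF W assms(6)] trail_nf_reduced assms(2-5) by metis
  then show ?thesis
    using Tr_nonempty[OF assms(2)] Tr_nonempty[OF assms(3)] by (intro edges_inj) auto
qed

lemma reduced_shortest:
  assumes W: "WA cmp conv e" and p: "p \<in> Tr cmp" and q: "q \<in> Tr cmp"
    and "reduced cmp e p" and "(p, q) \<in> approx cmp e"
  shows "length p \<le> length q"
proof -
  have "length (edges p) = length (fst (snd (trail_nf cmp e q)))"
    using approx_trail_nf[OF W assms(5)] trail_nf_reduced[OF p assms(4)]
    by (metis fst_conv length_rev snd_conv)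
  also have "\<dots> \<le> length (free_red (edges q))"
    by (simp add: trail_nf_def length_retract)
  also have "\<dots> \<le> length (edges q)"
    by (rule length_free_red)
  finally have "length (edges p) \<le> length (edges q)" .
  moreover have "0 < length p" "0 < length q"
    using Tr_nonempty p q by auto
  ultimately show ?thesis
    unfolding length_edges by linarith
qed

section \<open>Points\<close>

lemma equiv_approx: "equiv (Tr cmp) (approx cmp e)"
proof (rule equivI)
  show "approx cmp e \<subseteq> Tr cmp \<times> Tr cmp"
    by (auto simp: approx_def)
  show "refl_on (Tr cmp) (approx cmp e)"
    by (auto simp: refl_on_def approx_def)
  show "sym (approx cmp e)"
    using symD[OF sym_rtrancl[OF sym_Un_converse[of "step cmp e"]]]
    by (auto intro!: symI simp: approx_def)
  show "trans (approx cmp e)"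
    by (auto intro!: transI simp: approx_def)
qed

lemma cls_eq_iff: "p \<in> Tr cmp \<Longrightarrow> q \<in> Tr cmp \<Longrightarrow> cls cmp e p = cls cmp e q \<longleftrightarrow> (p, q) \<in> approx cmp e"
  unfolding cls_def by (rule eq_equiv_class_iff[OF equiv_approx])

lemma step_Tr: "(p, q) \<in> step cmp e \<Longrightarrow> p \<in> Tr cmp \<and> q \<in> Tr cmp"
  unfolding step_def by blast

lemma cls_eq_of_step: "(p, q) \<in> step cmp e \<Longrightarrow> cls cmp e p = cls cmp e q"
  unfolding cls_def by (rule equiv_class_eq[OF equiv_approx]) (use step_Tr in \<open>auto simp: approx_def\<close>)

lemma rep_cls_reduced:
  assumes W: "WA cmp conv e" and p: "p \<in> Tr cmp" and "reduced cmp e p"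
  shows "rep cmp e (cls cmp e p) = p"
  unfolding rep_def
proof (rule the_equality)
  show "p \<in> cls cmp e p \<and> reduced cmp e p"
    using equiv_class_self[OF equiv_approx p] assms(3) by (simp add: cls_def)
  fix q
  assume "q \<in> cls cmp e p \<and> reduced cmp e q"
  then show "q = p"
    using reduced_unique[OF W p _ assms(3)] by (auto simp: cls_def approx_def)
qed

lemma Xi_cls_reduced:
  assumes W: "WA cmp conv e" and "p \<in> Tr cmp" "reduced cmp e p" and "2 \<le> length p"
  shows "Xi cmp e (cls cmp e p) =
    {(cls cmp e p, cls cmp e (setptr p l)) | l. l < 3 \<and> l \<noteq> snd (last p)}"
  using assms(4) unfolding Xi_def ulen_def rep_cls_reduced[OF assms(1-3)] by auto

lemma step_backtrackI:
  "xs @ [(t, l), (s, l), (t, k)] @ ys \<in> Tr cmp \<Longrightarrow> xs @ [(t, k)] @ ys \<in> Tr cmp \<Longrightarrow>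
    (xs @ [(t, l), (s, l), (t, k)] @ ys, xs @ [(t, k)] @ ys) \<in> step cmp e"
  unfolding step_def by blast

lemma step_drop_lastI:
  "l \<noteq> k \<Longrightarrow> xs @ [(t, l), (s, k)] \<in> Tr cmp \<Longrightarrow> xs @ [(t, k)] \<in> Tr cmp \<Longrightarrow>
    (xs @ [(t, l), (s, k)], xs @ [(t, k)]) \<in> step cmp e"
  unfolding step_def by blast

lemma step_switch_ptrI:
  "t \<in> sE cmp e l k \<Longrightarrow> xs @ [(t, l)] \<in> Tr cmp \<Longrightarrow> xs @ [(t, k)] \<in> Tr cmp \<Longrightarrow>
    (xs @ [(t, l)], xs @ [(t, k)]) \<in> step cmp e"
  unfolding step_def by blast

lemma Tr_backtrack:
  assumes p: "xs @ [(t, l), (s, l), (t, k)] @ ys \<in> Tr cmp"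
  shows "xs @ [(t, k)] @ ys \<in> Tr cmp"
proof -
  have "xs @ [(t, l)] \<in> Tr cmp" and tail: "(t, k) # ys \<in> Tr cmp"
    using p Tr_append_Cons_iff[of xs "(t, l)" "(s, l) # (t, k) # ys"] by (auto simp: Tr_Cons_Cons_iff)
  moreover have "k < 3"
    using tail by (simp add: Tr_iff)
  ultimately show ?thesis
    using Tr_append_Cons_iff[of xs "(t, k)" ys] Tr_snoc_ptr by auto
qed

lemma cls_backtrack:
  "xs @ [(t, l), (s, l), (t, k)] @ ys \<in> Tr cmp \<Longrightarrow>
    cls cmp e (xs @ [(t, l), (s, l), (t, k)] @ ys) = cls cmp e (xs @ [(t, k)] @ ys)"
  by (intro cls_eq_of_step step_backtrackI Tr_backtrack)

lemma cls_drop_last: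
  assumes "l \<noteq> k" and p: "xs @ [(t, l), (s, k)] \<in> Tr cmp"
  shows "cls cmp e (xs @ [(t, l), (s, k)]) = cls cmp e (xs @ [(t, k)])"
proof -
  have "xs @ [(t, l)] \<in> Tr cmp" "k < 3"
    using p Tr_append_Cons_iff[of xs "(t, l)" "[(s, k)]"] Tr_snocD[of "xs @ [(t, l)]"] by auto
  then have "xs @ [(t, k)] \<in> Tr cmp"
    by (rule Tr_snoc_ptr)
  with assms show ?thesis
    by (intro cls_eq_of_step step_drop_lastI)
qed

lemma cls_setptr_drop_last:
  assumes q: "r @ [(t', k'), (t, k)] \<in> Tr cmp" and "n < 3" "n \<noteq> k'"
  shows "cls cmp e (r @ [(t', k'), (t, n)]) = cls cmp e (r @ [(t', n)])"
proof -
  have "r @ [(t', k'), (t, n)] \<in> Tr cmp"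
    using Tr_setptr[OF q \<open>n < 3\<close>] by simp
  with \<open>n \<noteq> k'\<close> show ?thesis
    by (intro cls_drop_last) auto
qed

lemma cls_switch_ptr:
  assumes "t \<in> sE cmp e l k" and p: "xs @ [(t, l)] \<in> Tr cmp" and "k < 3"
  shows "cls cmp e (xs @ [(t, l)]) = cls cmp e (xs @ [(t, k)])"
  using assms Tr_snoc_ptr[OF p \<open>k < 3\<close>] by (intro cls_eq_of_step step_switch_ptrI)

section \<open>Backtrack-free trails\<close>

definition backtrack_free :: "('b \<times> nat) list \<Rightarrow> bool" where
  "backtrack_free p \<longleftrightarrow>
     (\<forall>i. i + 2 < length p \<longrightarrow> fst (p ! i) \<noteq> fst (p ! (i + 2)) \<or> snd (p ! i) \<noteq> snd (p ! (i + 1)))"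

lemma backtrack_free_prefix:
  assumes "backtrack_free (xs @ ys)"
  shows "backtrack_free xs"
  unfolding backtrack_free_def
proof (intro allI impI)
  fix i
  assume "i + 2 < length xs"
  then show "fst (xs ! i) \<noteq> fst (xs ! (i + 2)) \<or> snd (xs ! i) \<noteq> snd (xs ! (i + 1))"
    using assms[unfolded backtrack_free_def, rule_format, of i] by (simp add: nth_append)
qed

lemma backtrack_free_snoc_ptr: "backtrack_free (xs @ [(t, k)]) \<Longrightarrow> backtrack_free (xs @ [(t, l)])"
  unfolding backtrack_free_def by (auto simp: nth_append)

lemma not_backtrack_free_obtain:
  assumes "\<not> backtrack_free p"
  obtains xs t l s k ys where "p = xs @ [(t, l), (s, l), (t, k)] @ ys"
proof -
  obtain i where i: "Suc (Suc i) < length p"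
    "fst (p ! i) = fst (p ! Suc (Suc i))" "snd (p ! i) = snd (p ! Suc i)"
    using assms unfolding backtrack_free_def by auto
  obtain t l s l' t' k where p_i: "p ! i = (t, l)" "p ! Suc i = (s, l')" "p ! Suc (Suc i) = (t', k)"
    by (metis prod.exhaust)
  have "drop i p = [(t, l), (s, l), (t, k)] @ drop (Suc (Suc (Suc i))) p"
    using i p_i Cons_nth_drop_Suc[of i p] Cons_nth_drop_Suc[of "Suc i" p]
      Cons_nth_drop_Suc[of "Suc (Suc i)" p] by simp
  then have "p = take i p @ [(t, l), (s, l), (t, k)] @ drop (Suc (Suc (Suc i))) p"
    by (metis append_take_drop_id)
  then show thesis
    by (rule that)
qed

lemma backtrack_free_representative:
  assumes "p \<in> Tr cmp"
  shows "\<exists>q \<in> Tr cmp. backtrack_free q \<and> (\<forall>l<3. cls cmp e (setptr q l) = cls cmp e (setptr p l))"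
  using assms
proof (induction "length p" arbitrary: p rule: less_induct)
  case less
  show ?case
  proof (cases "backtrack_free p")
    case False
    then obtain xs t l s k ys where p: "p = xs @ [(t, l), (s, l), (t, k)] @ ys"
      by (rule not_backtrack_free_obtain)
    define p' where "p' = xs @ [(t, k)] @ ys"
    have "cls cmp e (setptr p' m) = cls cmp e (setptr p m)" if "m < 3" for m
    proof -
      obtain k' ys' where "setptr ((t, k) # ys) m = (t, k') # ys'"
        by (cases ys rule: rev_cases) (auto simp: setptr_def)
      then have "setptr p m = xs @ [(t, l), (s, l), (t, k')] @ ys'" "setptr p' m = xs @ [(t, k')] @ ys'"
        unfolding p p'_def
        using setptr_append[of "(t, k) # ys" "xs @ [(t, l), (s, l)]" m]
          setptr_append[of "(t, k) # ys" xs m]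
        by simp_all
      moreover have "setptr p m \<in> Tr cmp"
        using less.prems that by (rule Tr_setptr)
      ultimately show ?thesis
        using cls_backtrack by metis
    qed
    moreover have "p' \<in> Tr cmp"
      using less.prems Tr_backtrack unfolding p p'_def by blast
    moreover have "length p' < length p"
      unfolding p p'_def by simp
    ultimately obtain q where "q \<in> Tr cmp" "backtrack_free q"
        "\<forall>l<3. cls cmp e (setptr q l) = cls cmp e (setptr p' l)"
      using less.hyps by blast
    with \<open>\<And>m. m < 3 \<Longrightarrow> cls cmp e (setptr p' m) = cls cmp e (setptr p m)\<close> show ?thesis
      by auto
  qed (use less.prems in blast)
qed

definition linked :: "('a::boolean_algebra \<Rightarrow> 'a \<Rightarrow> 'a) \<Rightarrow> 'a \<Rightarrow>
    ('a list \<times> nat) list set \<Rightarrow> ('a list \<times> nat) list set \<Rightarrow> bool" where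
  "linked cmp e u v \<longleftrightarrow> Xi_pair cmp e u v \<or> base_pair cmp e u v"

lemma base_pair_sym: "base_pair cmp e u v \<Longrightarrow> base_pair cmp e v u"
  unfolding base_pair_def by (metis distinct_length_2_or_more)

lemma linked_sym: "linked cmp e u v \<Longrightarrow> linked cmp e v u"
  unfolding linked_def Xi_pair_def using base_pair_sym by blast

lemma cls_singleton_eq_or_base_pair:
  assumes t: "t \<in> sB cmp" and "l < 3" "m < 3"
  shows "cls cmp e [(t, l)] = cls cmp e [(t, m)] \<or>
    base_pair cmp e (cls cmp e [(t, l)]) (cls cmp e [(t, m)])"
proof (cases "l = m")
  case False
  define n where "n = third l m"
  have n: "n < 3" "distinct [l, m, n]"
    using third_distinct[OF assms(2,3) False] by (simp_all add: n_def)
  then have "t ! n \<le> e \<or> t ! n \<le> - e"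
    using t atom_le_or_le_compl unfolding sB_def by blast
  then show ?thesis
  proof
    assume "t ! n \<le> e"
    then have "t \<in> sE cmp e l m"
      using t False by (simp add: sE_def n_def)
    then show ?thesis
      using cls_switch_ptr[of t cmp e l m "[]"] t assms by simp
  next
    assume "t ! n \<le> - e"
    then show ?thesis
      unfolding base_pair_def using t assms n by blast
  qed
qed simp

lemma reduced_of_backtrack_free:
  assumes "backtrack_free (r @ [(t', k), (t, k)])" and "t \<in> sB cmp"
    and "\<forall>n<3. n \<noteq> k \<longrightarrow> t \<notin> sE cmp e k n"
  shows "reduced cmp e (r @ [(t', k), (t, k)])"
  using assms unfolding reduced_def backtrack_free_def by (auto simp: nth_append sE_def)

lemma last_ptr_cases:
  assumes W: "WA cmp conv e" and q: "r @ [(t', k'), (t, k)] \<in> Tr cmp"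
    and bf: "backtrack_free (r @ [(t', k'), (t, k)])"
  obtains (collapse) \<nu> where "\<nu> < 3" "\<nu> \<noteq> k'"
      "cls cmp e (r @ [(t', k'), (t, k')]) = cls cmp e (r @ [(t', k'), (t, \<nu>)])"
    | (fork) "Xi cmp e (cls cmp e (r @ [(t', k'), (t, k')])) =
        {(cls cmp e (r @ [(t', k'), (t, k')]), cls cmp e (r @ [(t', k'), (t, n)])) | n. n < 3 \<and> n \<noteq> k'}"
      "\<And>n. n < 3 \<Longrightarrow> n \<noteq> k' \<Longrightarrow> cls cmp e (r @ [(t', k'), (t, k')]) \<noteq> cls cmp e (r @ [(t', n)])"
proof -
  let ?Q = "r @ [(t', k'), (t, k')]"
  have prefix: "r @ [(t', k')] \<in> Tr cmp" and "t \<in> sB cmp"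
    using q Tr_append_Cons_iff[of r "(t', k')" "[(t, k)]"] by (auto simp: Tr_Cons_Cons_iff)
  then have "k' < 3"
    using Tr_snocD by blast
  have Q: "?Q \<in> Tr cmp"
    using Tr_setptr[OF q \<open>k' < 3\<close>] by simp
  show thesis
  proof (cases "\<exists>\<nu><3. \<nu> \<noteq> k' \<and> t \<in> sE cmp e k' \<nu>")
    case True
    then obtain \<nu> where "\<nu> < 3" "\<nu> \<noteq> k'" "t \<in> sE cmp e k' \<nu>"
      by blast
    moreover have "cls cmp e ((r @ [(t', k')]) @ [(t, k')]) = cls cmp e ((r @ [(t', k')]) @ [(t, \<nu>)])"
      using Q \<open>\<nu> < 3\<close> \<open>t \<in> sE cmp e k' \<nu>\<close> by (intro cls_switch_ptr) auto
    ultimately show thesis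
      using collapse by simp
  next
    case False
    moreover have "backtrack_free ?Q"
      using backtrack_free_snoc_ptr[of "r @ [(t', k')]" t k k'] bf by simp
    ultimately have red: "reduced cmp e ?Q"
      using \<open>t \<in> sB cmp\<close> by (intro reduced_of_backtrack_free) auto
    have "Xi cmp e (cls cmp e ?Q) = {(cls cmp e ?Q, cls cmp e (setptr ?Q n)) | n. n < 3 \<and> n \<noteq> k'}"
      using Xi_cls_reduced[OF W Q red] by simp
    moreover have "cls cmp e ?Q \<noteq> cls cmp e (r @ [(t', n)])" if "n < 3" for n
    proof
      assume "cls cmp e ?Q = cls cmp e (r @ [(t', n)])"
      moreover have "r @ [(t', n)] \<in> Tr cmp"
        using Tr_snoc_ptr[OF prefix that] .
      ultimately have "length ?Q \<le> length (r @ [(t', n)])"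
        using reduced_shortest[OF W Q _ red] cls_eq_iff[OF Q] by blast
      then show False
        by simp
    qed
    ultimately show thesis
      using fork by simp
  qed
qed

lemma backtrack_free_linked:
  assumes W: "WA cmp conv e"
  shows "p \<in> Tr cmp \<Longrightarrow> backtrack_free p \<Longrightarrow> l < 3 \<Longrightarrow> m < 3 \<Longrightarrow>
    cls cmp e (setptr p l) = cls cmp e (setptr p m) \<or>
    linked cmp e (cls cmp e (setptr p l)) (cls cmp e (setptr p m))"
proof (induction p arbitrary: l m rule: rev_induct)
  case (snoc a xs)
  obtain t k where a: "a = (t, k)"
    by fastforce
  show ?case
  proof (cases xs rule: rev_cases)
    case Nil
    then have "t \<in> sB cmp"
      using snoc.prems(1) a by simp
    then show ?thesis
      using Nil a cls_singleton_eq_or_base_pair[of t cmp l m e] snoc.prems(3,4)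
      unfolding linked_def by (simp add: setptr_def) blast
  next
    case (snoc r b)
    obtain t' k' where b: "b = (t', k')"
      by fastforce
    define c where "c n = cls cmp e (r @ [(t', k'), (t, n)])" for n
    define c' where "c' n = cls cmp e (r @ [(t', n)])" for n
    have q: "r @ [(t', k'), (t, k)] \<in> Tr cmp" "backtrack_free (r @ [(t', k'), (t, k)])"
      using snoc.prems a b snoc by simp_all
    have prefix: "r @ [(t', k')] \<in> Tr cmp" "backtrack_free (r @ [(t', k')])"
      using q Tr_append_Cons_iff[of r "(t', k')" "[(t, k)]"] backtrack_free_prefix[of "r @ [(t', k')]"]
      by auto
    have IH: "c' i = c' j \<or> linked cmp e (c' i) (c' j)" if "i < 3" "j < 3" for i j
      using snoc.IH[OF _ _ that] prefix \<open>xs = r @ [b]\<close> b by (simp add: c'_def)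
    have drop: "c n = c' n" if "n < 3" "n \<noteq> k'" for n
      unfolding c_def c'_def using cls_setptr_drop_last[OF q(1) that] .
    have from_k': "c k' = c n \<or> linked cmp e (c k') (c n)" if "n < 3" "n \<noteq> k'" for n
      using W q
    proof (cases rule: last_ptr_cases)
      case (collapse \<nu>)
      then have "c k' = c' \<nu>"
        using drop[of \<nu>] by (simp add: c_def)
      moreover have "c' \<nu> = c' n \<or> linked cmp e (c' \<nu>) (c' n)"
        using IH collapse(1) that(1) .
      ultimately show ?thesis
        using drop[OF that] by simp
    next
      case fork
      then have "(c k', c n) \<in> Xi cmp e (c k')"
        using that unfolding c_def by blast
      then show ?thesis
        by (simp add: linked_def Xi_pair_def)
    qed
    have "c l = c m \<or> linked cmp e (c l) (c m)"
      using from_k'[of l] from_k'[of m] IH[of l m] drop[of l] drop[of m] snoc.prems(3,4) linked_sym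
      by (cases "l = k'"; cases "m = k'") auto
    then show ?thesis
      using a b snoc by (simp add: c_def)
  qed
qed (simp add: Tr_iff)

section \<open>Classification of triples\<close>

definition standard_triple :: "('a::boolean_algebra \<Rightarrow> 'a \<Rightarrow> 'a) \<Rightarrow> 'a \<Rightarrow>
    ('a list \<times> nat) list set \<times> ('a list \<times> nat) list set \<times> ('a list \<times> nat) list set \<Rightarrow> bool" where
  "standard_triple cmp e x \<longleftrightarrow>
     (\<exists>u\<in>sU cmp e. \<exists>v\<in>sU cmp e. \<exists>w\<in>sU cmp e. u \<noteq> v \<and> u \<noteq> w \<and> v \<noteq> w \<and>
        perm3 (u, v, w) x \<and>
        ((Xi cmp e u = {(u, v), (u, w)} \<and> Xi_pair cmp e v w) \<or>
         (Xi cmp e u = {(u, v), (u, w)} \<and> base_pair cmp e v w) \<or>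
         (base_pair cmp e u v \<and> base_pair cmp e u w \<and> base_pair cmp e v w)))
   \<or> (\<exists>u\<in>sU cmp e. \<exists>v\<in>sU cmp e. u \<noteq> v \<and> perm3 (u, u, v) x \<and>
        (Xi_pair cmp e u v \<or> base_pair cmp e u v))
   \<or> (\<exists>u\<in>sU cmp e. perm3 (u, u, u) x)"

lemma standard_triple_distinct:
  assumes "u \<in> sU cmp e" "v \<in> sU cmp e" "w \<in> sU cmp e" "u \<noteq> v" "u \<noteq> w" "v \<noteq> w"
    and "perm3 (u, v, w) x"
    and "(Xi cmp e u = {(u, v), (u, w)} \<and> linked cmp e v w) \<or>
      (base_pair cmp e u v \<and> base_pair cmp e u w \<and> base_pair cmp e v w)"
  shows "standard_triple cmp e x"
  unfolding standard_triple_def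
proof (rule disjI1, rule bexI[of _ u], rule bexI[of _ v], rule bexI[of _ w])
qed (use assms in \<open>auto simp: linked_def\<close>)

lemma standard_triple_repeated:
  assumes "u \<in> sU cmp e" "v \<in> sU cmp e" "perm3 (u, u, v) x" "u = v \<or> linked cmp e u v"
  shows "standard_triple cmp e x"
proof (cases "u = v")
  case True
  then show ?thesis
    unfolding standard_triple_def using assms by blast
next
  case False
  show ?thesis
    unfolding standard_triple_def
  proof (rule disjI2, rule disjI1, rule bexI[of _ u], rule bexI[of _ v])
  qed (use assms False in \<open>auto simp: linked_def\<close>)
qed

lemma perm3_index:
  fixes c :: "nat \<Rightarrow> 'b"
  shows "i < 3 \<Longrightarrow> j < 3 \<Longrightarrow> k < 3 \<Longrightarrow> distinct [i, j, k] \<Longrightarrow> perm3 (c i, c j, c k) (c 0, c 1, c 2)"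
  using less_3_cases[of i] less_3_cases[of j] less_3_cases[of k] by (auto simp: perm3_def)

lemma standard_triple_collapsed:
  fixes c :: "nat \<Rightarrow> ('a::boolean_algebra list \<times> nat) list set" and i j k :: nat
  assumes "\<And>n. n < 3 \<Longrightarrow> c n \<in> sU cmp e" and "i < 3" "j < 3" "k < 3" "distinct [i, j, k]"
    and "c i = c j" and "c i = c k \<or> linked cmp e (c i) (c k)"
  shows "standard_triple cmp e (c 0, c 1, c 2)"
  using perm3_index[OF assms(2-5), of c] assms
  by (intro standard_triple_repeated[of "c i" _ _ "c k"]) auto

lemma standard_triple_of_base_pairs:
  fixes c :: "nat \<Rightarrow> ('a::boolean_algebra list \<times> nat) list set"
  assumes U: "\<And>n. n < 3 \<Longrightarrow> c n \<in> sU cmp e"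
    and P: "\<And>i j. i < 3 \<Longrightarrow> j < 3 \<Longrightarrow> c i = c j \<or> base_pair cmp e (c i) (c j)"
  shows "standard_triple cmp e (c 0, c 1, c 2)"
proof -
  have L: "c i = c j \<or> linked cmp e (c i) (c j)" if "i < 3" "j < 3" for i j
    using P[OF that] by (auto simp: linked_def)
  consider "c 0 = c 1" | "c 0 = c 2" | "c 1 = c 2" | "distinct [c 0, c 1, c 2]"
    by fastforce
  then show ?thesis
  proof cases
    case 1
    then show ?thesis
      using standard_triple_collapsed[where c = c and i = 0 and j = 1 and k = 2, OF U] L[of 0 2] by simp
  next
    case 2
    then show ?thesis
      using standard_triple_collapsed[where c = c and i = 0 and j = 2 and k = 1, OF U] L[of 0 1] by simp
  next
    case 3
    then show ?thesis
      using standard_triple_collapsed[where c = c and i = 1 and j = 2 and k = 0, OF U] L[of 1 0] by simp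
  next
    case 4
    then show ?thesis
      using U P[of 0 1] P[of 0 2] P[of 1 2] perm3_index[of 0 1 2 c]
      by (intro standard_triple_distinct) auto
  qed
qed

lemma backtrack_free_standard_triple:
  assumes W: "WA cmp conv e" and p: "p \<in> Tr cmp" and bf: "backtrack_free p"
  shows "standard_triple cmp e (cls cmp e (setptr p 0), cls cmp e (setptr p 1), cls cmp e (setptr p 2))"
proof -
  define c where "c n = cls cmp e (setptr p n)" for n
  have U: "c n \<in> sU cmp e" if "n < 3" for n
    unfolding c_def sU_def using Tr_setptr[OF p that] by blast
  have L: "c i = c j \<or> linked cmp e (c i) (c j)" if "i < 3" "j < 3" for i j
    unfolding c_def using backtrack_free_linked[OF W p bf that] .
  from Tr_nonempty[OF p] have "standard_triple cmp e (c 0, c 1, c 2)"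
  proof (cases rule: trail_last_cases)
    case (single t k)
    then have "t \<in> sB cmp"
      using p by simp
    moreover have "c n = cls cmp e [(t, n)]" for n
      by (simp add: c_def single setptr_def)
    ultimately show ?thesis
      using U cls_singleton_eq_or_base_pair by (intro standard_triple_of_base_pairs) simp_all
  next
    case (snoc2 r t' k' t k)
    then have c: "c n = cls cmp e (r @ [(t', k'), (t, n)])" for n
      by (simp add: c_def)
    have "k' < 3"
      using p snoc2 Tr_append_Cons_iff[of r "(t', k')" "[(t, k)]"] Tr_snocD by blast
    obtain l m where lm: "l < 3" "m < 3" "distinct [k', l, m]"
      and all: "\<And>n. n < 3 \<Longrightarrow> n = k' \<or> n = l \<or> n = m"
      using other_two_indices[OF \<open>k' < 3\<close>] by blast
    from W p[unfolded snoc2] bf[unfolded snoc2] show ?thesis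
    proof (cases rule: last_ptr_cases)
      case (collapse \<nu>)
      have "third k' \<nu> < 3" "distinct [k', \<nu>, third k' \<nu>]"
        using third_distinct[OF \<open>k' < 3\<close> collapse(1)] collapse(2) by auto
      then show ?thesis
        using standard_triple_collapsed[where c = c and i = k' and j = \<nu> and k = "third k' \<nu>", OF U]
          L[of \<nu> "third k' \<nu>"] \<open>k' < 3\<close> collapse by (simp add: c)
    next
      case fork
      have "Xi cmp e (c k') = {(c k', c n) | n. n < 3 \<and> n \<noteq> k'}"
        using fork(1) by (simp add: c)
      also have "\<dots> = (\<lambda>n. (c k', c n)) ` {n. n < 3 \<and> n \<noteq> k'}"
        by blast
      also have "{n. n < 3 \<and> n \<noteq> k'} = {l, m}"
        using lm all by auto
      finally have Xi: "Xi cmp e (c k') = {(c k', c l), (c k', c m)}"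
        by simp
      have "c k' \<noteq> c n" if "n < 3" "n \<noteq> k'" for n
        using fork(2)[OF that] cls_setptr_drop_last[OF p[unfolded snoc2] that] unfolding c by simp
      then have "c k' \<noteq> c l" "c k' \<noteq> c m"
        using lm by auto
      show ?thesis
      proof (cases "c l = c m")
        case True
        have "linked cmp e (c l) (c k')"
          using Xi by (simp add: linked_def Xi_pair_def)
        then show ?thesis
          using standard_triple_collapsed[where c = c and i = l and j = m and k = k', OF U]
            lm \<open>k' < 3\<close> True by auto
      next
        case False
        then show ?thesis
          using U lm \<open>k' < 3\<close> Xi L[of l m] \<open>c k' \<noteq> c l\<close> \<open>c k' \<noteq> c m\<close> perm3_index[of k' l m c]
          by (intro standard_triple_distinct) auto
      qed
    qed
  qed
  then show ?thesis
    by (simp add: c_def)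
qed

theorem lemma9:
  fixes cmp :: "'a::complete_boolean_algebra \<Rightarrow> 'a \<Rightarrow> 'a"
    and conv :: "'a \<Rightarrow> 'a" and e :: 'a
    and x :: "('a list \<times> nat) list set \<times> ('a list \<times> nat) list set \<times> ('a list \<times> nat) list set"
  assumes "WA cmp conv e"
    and "atomic_ba TYPE('a)"
    and "x \<in> sV cmp e"
  shows "(\<exists>u\<in>sU cmp e. \<exists>v\<in>sU cmp e. \<exists>w\<in>sU cmp e. u \<noteq> v \<and> u \<noteq> w \<and> v \<noteq> w \<and>
            perm3 (u, v, w) x \<and>
            ((Xi cmp e u = {(u, v), (u, w)} \<and> Xi_pair cmp e v w) \<or>
             (Xi cmp e u = {(u, v), (u, w)} \<and> base_pair cmp e v w) \<or>
             (base_pair cmp e u v \<and> base_pair cmp e u w \<and> base_pair cmp e v w)))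
      \<or> (\<exists>u\<in>sU cmp e. \<exists>v\<in>sU cmp e. u \<noteq> v \<and> perm3 (u, u, v) x \<and>
            (Xi_pair cmp e u v \<or> base_pair cmp e u v))
      \<or> (\<exists>u\<in>sU cmp e. perm3 (u, u, u) x)"
proof -
  obtain p where p: "p \<in> Tr cmp"
    and x: "x = (cls cmp e (setptr p 0), cls cmp e (setptr p 1), cls cmp e (setptr p 2))"
    using assms(3) unfolding sV_def by blast
  obtain q where q: "q \<in> Tr cmp" "backtrack_free q"
    and same: "\<forall>l<3. cls cmp e (setptr q l) = cls cmp e (setptr p l)"
    using backtrack_free_representative[OF p] by blast
  have "x = (cls cmp e (setptr q 0), cls cmp e (setptr q 1), cls cmp e (setptr q 2))"
    using x same by simp
  then have "standard_triple cmp e x"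
    using backtrack_free_standard_triple[OF assms(1) q] by simp
  then show ?thesis
    unfolding standard_triple_def .
qed

end
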